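(* For a planted $K$-path, the likelihood ratio is \[ L(G)=\frac{\mathbb{P}_1(G)}{\mathbb{P}_0(G)}=\frac{1}{n(n-1)\cdots(n-K+1)}\,\bigl|\{K\text{-paths in }G\}\bigr|\,\Bigl(\frac{\lambda}{n}\Bigr)^{-K+1}. \] Moreover $\mathbb{E}_0(L^2)=\mathbb{E}_0(x^S)$, where $x=n/\lambda$ and $S$ is the number of edges common to the $K$-path $(1-2-\cdots-K)$ and a $K$-path $\pi$ chosen uniformly at random among the $n(n-1)\cdots(n-K+1)$ possible $K$-paths on node set $[n]$.
   Context: Model: $n$ nodes, $\lambda>0$. $\mathbb{P}_0$: $G\sim\mathcal G(n,\lambda/n)$. $\mathbb{P}_1$: $G=G_0\cup G'$ with $G_0\sim\mathcal G(n,\lambda/n)$ and $G'$ the image of the path $1-2-\cdots-K$ under a uniformly random injection $[K]\to[n]$ independent of $G_0$. An ordered set $(i_1,\dots,i_K)$ of $K$ distinct nodes of $[n]$ is a $K$-path in $G$ if the edges $(i_\ell,i_{\ell+1})$, $\ell=1,\dots,K-1$, are all present in $G$; $K$-paths are counted as ordered sequences. $\mathbb{E}_0$ is expectation under $\mathbb{P}_0$. *)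

theory Defs
  imports "HOL-Probability.Probability"
begin

definition all_edges :: "nat \<Rightarrow> nat set set" where
  "all_edges n = {e. \<exists>i j. i < n \<and> j < n \<and> i \<noteq> j \<and> e = {i, j}}"

definition er_graph :: "nat \<Rightarrow> real \<Rightarrow> nat set set pmf" where
  "er_graph n p =
     map_pmf (\<lambda>f. {e \<in> all_edges n. f e})
       (Pi_pmf (all_edges n) False (\<lambda>_. bernoulli_pmf p))"

text \<open>Ordered sequences of K distinct nodes of [n] (= injections [K] -> [n]).\<close>
definition seqs :: "nat \<Rightarrow> nat \<Rightarrow> nat list set" where
  "seqs n K = {xs. length xs = K \<and> distinct xs \<and> set xs \<subseteq> {..<n}}"

definition path_edges :: "nat list \<Rightarrow> nat set set" where
  "path_edges xs = {{xs ! l, xs ! (l + 1)} | l. l + 1 < length xs}"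

text \<open>K-paths in G, counted as ordered sequences.\<close>
definition K_paths :: "nat \<Rightarrow> nat \<Rightarrow> nat set set \<Rightarrow> nat list set" where
  "K_paths n K G = {xs \<in> seqs n K. \<forall>l. l + 1 < K \<longrightarrow> {xs ! l, xs ! (l + 1)} \<in> G}"

definition P0 :: "nat \<Rightarrow> real \<Rightarrow> nat set set pmf" where
  "P0 n lam = er_graph n (lam / real n)"

definition P1 :: "nat \<Rightarrow> nat \<Rightarrow> real \<Rightarrow> nat set set pmf" where
  "P1 n K lam =
     do { G0 \<leftarrow> er_graph n (lam / real n);
          \<sigma> \<leftarrow> pmf_of_set (seqs n K);
          return_pmf (G0 \<union> path_edges \<sigma>) }"

definition LR :: "nat \<Rightarrow> nat \<Rightarrow> real \<Rightarrow> nat set set \<Rightarrow> real" where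
  "LR n K lam G = pmf (P1 n K lam) G / pmf (P0 n lam) G"

end

theory Submission
  imports Defs
begin

text \<open>
  Write \<open>p = \<lambda>/n\<close>, \<open>A\<close> for the set of potential edges, \<open>E(\<sigma>)\<close> for the edge set of the
  path \<open>\<sigma>\<close> and \<open>S\<close> for the set of \<open>K\<close>-sequences. Given the planted path \<open>\<sigma>\<close>, the graph \<open>G \<supseteq> E(\<sigma>)\<close> arises iff the
  Erdos-Renyi part contains \<open>G - E(\<sigma>)\<close> and avoids the complement of \<open>G\<close>, which has
  probability \<open>p\<^bsup>|G|-(K-1)\<^esup>(1-p)\<^bsup>|A|-|G|\<^esup>\<close>; dividing the average over \<open>\<sigma>\<close> by
  \<open>P\<^sub>0(G) = p\<^bsup>|G|\<^esup>(1-p)\<^bsup>|A|-|G|\<^esup>\<close> gives \<open>L(G) = #paths(G) / (|S| p\<^bsup>K-1\<^esup>)\<close>.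
  Squaring the path count yields a double sum over pairs \<open>(\<sigma>, \<tau>)\<close> of the probability
  \<open>p\<^bsup>|E(\<sigma>) \<union> E(\<tau>)|\<^esup> = p\<^bsup>2(K-1)\<^esup> (1/p)\<^bsup>|E(\<sigma>) \<inter> E(\<tau>)|\<^esup>\<close> that both paths are
  present. Relabelling the nodes by a permutation that maps the path \<open>0, \<dots>, K-1\<close> to \<open>\<sigma>\<close>
  shows that the inner sum does not depend on \<open>\<sigma>\<close>.
\<close>

definition random_subset :: "'a set \<Rightarrow> real \<Rightarrow> 'a set pmf" where
  "random_subset A p = map_pmf (\<lambda>f. {x \<in> A. f x}) (Pi_pmf A False (\<lambda>_. bernoulli_pmf p))"

lemma er_graph_eq_random_subset: "er_graph n p = random_subset (all_edges n) p"
  unfolding er_graph_def random_subset_def ..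

lemma set_pmf_random_subset: "set_pmf (random_subset A p) \<subseteq> Pow A"
  unfolding random_subset_def by auto

lemma finite_set_pmf_random_subset: "finite A \<Longrightarrow> finite (set_pmf (random_subset A p))"
  using set_pmf_random_subset by (rule finite_subset) simp

lemma prob_random_subset_Pi:
  assumes "finite A"
  shows "measure_pmf.prob (random_subset A p) {X. X \<subseteq> A \<and> (\<forall>x\<in>A. (x \<in> X) \<in> B x)}
       = (\<Prod>x\<in>A. measure_pmf.prob (bernoulli_pmf p) (B x))"
proof -
  have "(\<lambda>f. {x \<in> A. f x}) -` {X. X \<subseteq> A \<and> (\<forall>x\<in>A. (x \<in> X) \<in> B x)} = Pi A B"
    by (auto simp: Pi_def)
  then show ?thesis
    unfolding random_subset_def measure_map_pmf by (simp add: measure_Pi_pmf_Pi[OF assms])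
qed

lemma prob_random_subset_supset:
  assumes "finite A" "D \<subseteq> A" "0 \<le> p" "p \<le> 1"
  shows "measure_pmf.prob (random_subset A p) {X. D \<subseteq> X} = p ^ card D"
proof -
  have "measure_pmf.prob (random_subset A p) {X. D \<subseteq> X}
      = measure_pmf.prob (random_subset A p) {X. X \<subseteq> A \<and> (\<forall>x\<in>A. (x \<in> X) \<in> (if x \<in> D then {True} else UNIV))}"
    using assms(2) set_pmf_random_subset[of A p] by (intro measure_pmf.finite_measure_eq_AE AE_pmfI) auto
  also have "\<dots> = (\<Prod>x\<in>A. if x \<in> D then p else 1)"
    using assms(3,4) by (subst prob_random_subset_Pi[OF assms(1)]) (auto simp: measure_pmf_single intro!: prod.cong)
  also have "\<dots> = (\<Prod>x\<in>{x \<in> A. x \<in> D}. p)"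
    by (rule prod.inter_filter[OF assms(1), symmetric])
  also have "{x \<in> A. x \<in> D} = D"
    using assms(2) by auto
  finally show ?thesis by simp
qed

lemma prob_random_subset_Un_eq:
  assumes "finite A" "E \<subseteq> X" "X \<subseteq> A" "0 \<le> p" "p \<le> 1"
  shows "measure_pmf.prob (random_subset A p) {Y. Y \<union> E = X}
       = p ^ (card X - card E) * (1 - p) ^ (card A - card X)"
proof -
  have "{Y. Y \<union> E = X} = {Y. Y \<subseteq> A \<and> (\<forall>x\<in>A. (x \<in> Y) \<in> (if x \<in> E then UNIV else {x \<in> X}))}"
    using assms(2,3) by auto
  then have "measure_pmf.prob (random_subset A p) {Y. Y \<union> E = X}
      = (\<Prod>x\<in>A. if x \<in> E then 1 else if x \<in> X then p else 1 - p)"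
    using assms(4,5) by (auto simp: prob_random_subset_Pi[OF assms(1)] measure_pmf_single intro!: prod.cong)
  also have "\<dots> = (\<Prod>x\<in>A - E. if x \<in> X then p else 1 - p)"
    using assms(1) by (simp add: set_diff_eq prod.inter_filter) (rule prod.cong; simp)
  also have "\<dots> = p ^ card (X - E) * (1 - p) ^ card (A - X)"
  proof -
    have "(A - E) \<inter> {x. x \<in> X} = X - E" "(A - E) \<inter> - {x. x \<in> X} = A - X"
      using assms(2,3) by auto
    then show ?thesis using assms(1) by (simp add: prod.If_cases)
  qed
  finally show ?thesis
    using assms(1-3) by (simp add: card_Diff_subset finite_subset)
qed

lemma pmf_random_subset:
  assumes "finite A" "X \<subseteq> A" "0 \<le> p" "p \<le> 1"
  shows "pmf (random_subset A p) X = p ^ card X * (1 - p) ^ (card A - card X)"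
  using prob_random_subset_Un_eq[OF assms(1) empty_subsetI assms(2-4)]
  by (simp add: measure_pmf_single)

lemma path_edges_conv_image: "path_edges xs = (\<lambda>l. {xs ! l, xs ! (l + 1)}) ` {..<length xs - 1}"
  unfolding path_edges_def by auto

lemma finite_path_edges: "finite (path_edges xs)"
  unfolding path_edges_conv_image by simp

lemma path_edges_map: "path_edges (map f xs) = image f ` path_edges xs"
  unfolding path_edges_conv_image image_image by auto

lemma card_path_edges:
  assumes "distinct xs"
  shows "card (path_edges xs) = length xs - 1"
proof -
  have "inj_on (\<lambda>l. {xs ! l, xs ! (l + 1)}) {..<length xs - 1}"
  proof (rule inj_onI)
    fix l m assume "l \<in> {..<length xs - 1}" "m \<in> {..<length xs - 1}"
      and "{xs ! l, xs ! (l + 1)} = {xs ! m, xs ! (m + 1)}"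
    then show "l = m"
      using assms by (auto simp: doubleton_eq_iff nth_eq_iff_index_eq)
  qed
  then show ?thesis
    unfolding path_edges_conv_image by (simp add: card_image)
qed

lemma path_edges_subset_all_edges:
  assumes "xs \<in> seqs n K"
  shows "path_edges xs \<subseteq> all_edges n"
proof
  fix e assume "e \<in> path_edges xs"
  then obtain l where l: "l + 1 < length xs" "e = {xs ! l, xs ! (l + 1)}"
    unfolding path_edges_def by blast
  moreover have "xs ! l \<noteq> xs ! (l + 1)"
    using assms l(1) by (simp add: seqs_def nth_eq_iff_index_eq)
  moreover have "xs ! l < n" "xs ! (l + 1) < n"
    using assms l(1) unfolding seqs_def by (auto intro!: subsetD[of "set xs" "{..<n}", simplified] nth_mem)
  ultimately show "e \<in> all_edges n"
    unfolding all_edges_def by blast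
qed

lemma all_edges_subset_Pow: "all_edges n \<subseteq> Pow {..<n}"
  unfolding all_edges_def by auto

lemma finite_all_edges: "finite (all_edges n)"
  using all_edges_subset_Pow by (rule finite_subset) simp

lemma K_paths_eq: "K_paths n K G = {xs \<in> seqs n K. path_edges xs \<subseteq> G}"
  unfolding K_paths_def path_edges_def seqs_def by auto

lemma card_path_edges_seqs: "xs \<in> seqs n K \<Longrightarrow> card (path_edges xs) = K - 1"
  by (simp add: seqs_def card_path_edges)

lemma upt_in_seqs: "K \<le> n \<Longrightarrow> [0..<K] \<in> seqs n K"
  unfolding seqs_def by auto

lemma finite_seqs: "finite (seqs n K)"
  unfolding seqs_def by (rule finite_subset[OF _ finite_lists_length_eq[of "{..<n}" K]]) auto

lemma card_seqs: "K \<le> n \<Longrightarrow> card (seqs n K) = (\<Prod>i<K. n - i)"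
proof -
  assume "K \<le> n"
  then have "{n - K + 1..n} = (\<lambda>i. n - i) ` {..<K}"
  proof (intro equalityI subsetI)
    fix x assume "x \<in> {n - K + 1..n}"
    then show "x \<in> (\<lambda>i. n - i) ` {..<K}"
      by (intro image_eqI[of _ _ "n - x"]) auto
  qed auto
  moreover have "inj_on (\<lambda>i. n - i) {..<K}"
    using \<open>K \<le> n\<close> by (auto simp: inj_on_def)
  ultimately show ?thesis
    unfolding seqs_def using \<open>K \<le> n\<close> by (simp add: card_lists_distinct_length_eq prod.reindex)
qed

lemma obtain_bij_with_map_upt:
  assumes "\<sigma> \<in> seqs n K" "K \<le> n"
  obtains \<pi> where "bij_betw \<pi> {..<n} {..<n}" "map \<pi> [0..<K] = \<sigma>"
proof -
  have len: "length \<sigma> = K" and dist: "distinct \<sigma>" and sub: "set \<sigma> \<subseteq> {..<n}"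
    using assms(1) unfolding seqs_def by auto
  have "card ({..<n} - {..<K}) = card ({..<n} - set \<sigma>)"
    using assms(2) sub by (simp add: card_Diff_subset distinct_card[OF dist] len)
  then obtain h where h: "bij_betw h ({..<n} - {..<K}) ({..<n} - set \<sigma>)"
    by (metis finite_same_card_bij finite_Diff finite_lessThan)
  have "bij_betw ((!) \<sigma>) {..<K} (set \<sigma>)"
    using dist len by (intro bij_betw_nth) auto
  from bij_betw_disjoint_Un[OF this h]
  have "bij_betw (\<lambda>x. if x \<in> {..<K} then \<sigma> ! x else h x) {..<n} {..<n}"
    using assms(2) sub by (simp add: Un_absorb1 ivl_disj_un_one ivl_disj_int_one)
  moreover have "map (\<lambda>x. if x \<in> {..<K} then \<sigma> ! x else h x) [0..<K] = \<sigma>"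
    using len by (intro nth_equalityI) auto
  ultimately show ?thesis using that by blast
qed

lemma bij_betw_map_seqs:
  assumes "bij_betw \<pi> {..<n} {..<n}"
  shows "bij_betw (map \<pi>) (seqs n K) (seqs n K)"
proof (rule bij_betw_byWitness[where f' = "map (inv_into {..<n} \<pi>)"])
  have inv: "bij_betw (inv_into {..<n} \<pi>) {..<n} {..<n}"
    using assms by (rule bij_betw_inv_into)
  show "\<forall>xs\<in>seqs n K. map (inv_into {..<n} \<pi>) (map \<pi> xs) = xs"
    using assms by (auto simp: seqs_def intro!: map_idI bij_betw_inv_into_left)
  show "\<forall>xs\<in>seqs n K. map \<pi> (map (inv_into {..<n} \<pi>) xs) = xs"
    using assms by (auto simp: seqs_def intro!: map_idI bij_betw_inv_into_right)
  show "map \<pi> ` seqs n K \<subseteq> seqs n K" "map (inv_into {..<n} \<pi>) ` seqs n K \<subseteq> seqs n K"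
    using assms inv by (auto simp: seqs_def distinct_map bij_betw_def intro: inj_on_subset) blast+
qed

lemma card_path_edges_Int_map:
  assumes "inj_on \<pi> {..<n}" "\<sigma> \<in> seqs n K" "\<tau> \<in> seqs n K"
  shows "card (path_edges (map \<pi> \<sigma>) \<inter> path_edges (map \<pi> \<tau>)) = card (path_edges \<sigma> \<inter> path_edges \<tau>)"
proof -
  have inj: "inj_on (image \<pi>) (Pow {..<n})"
    using assms(1) by (rule inj_on_image_Pow)
  have sub: "path_edges \<sigma> \<subseteq> Pow {..<n}" "path_edges \<tau> \<subseteq> Pow {..<n}"
    using assms(2,3) path_edges_subset_all_edges all_edges_subset_Pow by blast+
  have "path_edges (map \<pi> \<sigma>) \<inter> path_edges (map \<pi> \<tau>) = image \<pi> ` (path_edges \<sigma> \<inter> path_edges \<tau>)"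
    unfolding path_edges_map using inj_on_image_Int[OF inj sub] ..
  moreover have "inj_on (image \<pi>) (path_edges \<sigma> \<inter> path_edges \<tau>)"
    using inj sub by (blast intro: inj_on_subset)
  ultimately show ?thesis
    by (simp add: card_image)
qed

lemma sum_seqs_overlap_eq_upt:
  assumes "\<sigma> \<in> seqs n K" "K \<le> n"
  shows "(\<Sum>\<tau>\<in>seqs n K. f (card (path_edges \<sigma> \<inter> path_edges \<tau>)))
       = (\<Sum>\<tau>\<in>seqs n K. f (card (path_edges [0..<K] \<inter> path_edges \<tau>)))"
proof -
  obtain \<pi> where \<pi>: "bij_betw \<pi> {..<n} {..<n}" and \<sigma>: "map \<pi> [0..<K] = \<sigma>"
    using obtain_bij_with_map_upt[OF assms] .
  have "(\<Sum>\<tau>\<in>seqs n K. f (card (path_edges \<sigma> \<inter> path_edges \<tau>)))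
      = (\<Sum>\<tau>\<in>seqs n K. f (card (path_edges (map \<pi> [0..<K]) \<inter> path_edges (map \<pi> \<tau>))))"
    using sum.reindex_bij_betw[OF bij_betw_map_seqs[OF \<pi>], of "\<lambda>\<tau>. f (card (path_edges \<sigma> \<inter> path_edges \<tau>))"] \<sigma>
    by simp
  also have "\<dots> = (\<Sum>\<tau>\<in>seqs n K. f (card (path_edges [0..<K] \<inter> path_edges \<tau>)))"
    using \<pi> upt_in_seqs[OF assms(2)] by (intro sum.cong) (auto simp: bij_betw_def card_path_edges_Int_map)
  finally show ?thesis .
qed

lemma P0_eq_random_subset: "P0 n lam = random_subset (all_edges n) (lam / real n)"
  unfolding P0_def er_graph_eq_random_subset ..

lemma P1_eq_bind:
  "P1 n K lam = pmf_of_set (seqs n K) \<bind>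
     (\<lambda>\<sigma>. map_pmf (\<lambda>G0. G0 \<union> path_edges \<sigma>) (random_subset (all_edges n) (lam / real n)))"
  unfolding P1_def er_graph_eq_random_subset map_pmf_def
  by (subst bind_commute_pmf) simp

lemma pmf_P1:
  assumes "K \<le> n" "0 \<le> lam" "lam \<le> real n" "G \<subseteq> all_edges n"
  defines "p \<equiv> lam / real n"
  shows "pmf (P1 n K lam) G = real (card (K_paths n K G)) * p ^ (card G - (K - 1))
           * (1 - p) ^ (card (all_edges n) - card G) / real (card (seqs n K))"
proof -
  let ?S = "seqs n K" and ?q = "p ^ (card G - (K - 1)) * (1 - p) ^ (card (all_edges n) - card G)"
  have p: "0 \<le> p" "p \<le> 1"
    using assms(2,3) by (auto simp: p_def divide_le_eq_1)
  have S: "?S \<noteq> {}" "finite ?S"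
    using upt_in_seqs[OF assms(1)] finite_seqs by auto
  have "pmf (P1 n K lam) G
      = (\<Sum>\<sigma>\<in>?S. measure_pmf.prob (random_subset (all_edges n) p) {G0. G0 \<union> path_edges \<sigma> = G}) / card ?S"
    unfolding P1_eq_bind pmf_bind integral_pmf_of_set[OF S] pmf_map p_def by (simp add: vimage_def)
  also have "\<dots> = (\<Sum>\<sigma>\<in>?S. if path_edges \<sigma> \<subseteq> G then ?q else 0) / card ?S"
  proof (intro sum.cong arg_cong2[where f = "(/)"] refl)
    fix \<sigma> assume \<sigma>: "\<sigma> \<in> ?S"
    have "card (path_edges \<sigma>) = K - 1"
      using \<sigma> by (rule card_path_edges_seqs)
    moreover have "{G0. G0 \<union> path_edges \<sigma> = G} = {}" if "\<not> path_edges \<sigma> \<subseteq> G"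
      using that by auto
    ultimately show "measure_pmf.prob (random_subset (all_edges n) p) {G0. G0 \<union> path_edges \<sigma> = G}
        = (if path_edges \<sigma> \<subseteq> G then ?q else 0)"
      using prob_random_subset_Un_eq[OF finite_all_edges _ assms(4) p] by auto
  qed
  also have "\<dots> = real (card (K_paths n K G)) * ?q / card ?S"
    unfolding K_paths_eq using S(2) by (simp add: sum.inter_filter[symmetric])
  finally show ?thesis by simp
qed

lemma LR_eq:
  assumes "K \<le> n" "0 < lam" "lam < real n" "G \<subseteq> all_edges n"
  shows "LR n K lam G = real (card (K_paths n K G)) / (real (card (seqs n K)) * (lam / real n) ^ (K - 1))"
proof -
  define p where "p = lam / real n"
  have p: "0 < p" "p < 1"
    using assms(2,3) by (auto simp: p_def)
  have P0: "pmf (P0 n lam) G = p ^ card G * (1 - p) ^ (card (all_edges n) - card G)"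
    unfolding P0_eq_random_subset p_def using p
    by (intro pmf_random_subset[OF finite_all_edges assms(4)]) (auto simp: p_def)
  note P1 = pmf_P1[OF assms(1) less_imp_le[OF assms(2)] less_imp_le[OF assms(3)] assms(4), folded p_def]
  show ?thesis
  proof (cases "K_paths n K G = {}")
    case True
    then show ?thesis
      unfolding LR_def P1 by simp
  next
    case False
    then obtain \<sigma> where "\<sigma> \<in> seqs n K" "path_edges \<sigma> \<subseteq> G"
      unfolding K_paths_eq by auto
    moreover have "card (path_edges \<sigma>) = K - 1"
      using \<open>\<sigma> \<in> seqs n K\<close> by (rule card_path_edges_seqs)
    ultimately have "K - 1 \<le> card G"
      using card_mono[OF finite_subset[OF assms(4) finite_all_edges]] by metis
    then have "p ^ card G = p ^ (card G - (K - 1)) * p ^ (K - 1)"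
      by (simp flip: power_add)
    then show ?thesis
      unfolding LR_def P1 P0 p_def[symmetric] using p upt_in_seqs[OF assms(1)] finite_seqs
      by (simp add: field_simps card_gt_0_iff)
  qed
qed

lemma expectation_card_K_paths_sq:
  assumes "0 \<le> p" "p \<le> 1"
  shows "measure_pmf.expectation (random_subset (all_edges n) p) (\<lambda>G. real (card (K_paths n K G)) ^ 2)
       = (\<Sum>\<sigma>\<in>seqs n K. \<Sum>\<tau>\<in>seqs n K. p ^ card (path_edges \<sigma> \<union> path_edges \<tau>))"
proof -
  let ?M = "random_subset (all_edges n) p" and ?S = "seqs n K"
  note integrable = integrable_measure_pmf_finite[OF finite_set_pmf_random_subset[OF finite_all_edges]]
  have "real (card (K_paths n K G)) = (\<Sum>\<sigma>\<in>?S. indicator {G. path_edges \<sigma> \<subseteq> G} G)" for G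
    unfolding K_paths_eq using finite_seqs by (simp add: indicator_def sum.inter_filter[symmetric] Collect_conj_eq)
  then have "real (card (K_paths n K G)) ^ 2
      = (\<Sum>\<sigma>\<in>?S. \<Sum>\<tau>\<in>?S. indicator {G. path_edges \<sigma> \<union> path_edges \<tau> \<subseteq> G} G)" for G
    by (simp add: power2_eq_square sum_product indicator_def of_bool_conj)
  then have "measure_pmf.expectation ?M (\<lambda>G. real (card (K_paths n K G)) ^ 2)
      = (\<Sum>\<sigma>\<in>?S. \<Sum>\<tau>\<in>?S. measure_pmf.prob ?M {G. path_edges \<sigma> \<union> path_edges \<tau> \<subseteq> G})"
    by (simp add: integrable)
  also have "\<dots> = (\<Sum>\<sigma>\<in>?S. \<Sum>\<tau>\<in>?S. p ^ card (path_edges \<sigma> \<union> path_edges \<tau>))"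
    using path_edges_subset_all_edges
    by (intro sum.cong refl prob_random_subset_supset[OF finite_all_edges _ assms]) blast
  finally show ?thesis .
qed

lemma power_card_Un_path_edges:
  fixes p :: real
  assumes "\<sigma> \<in> seqs n K" "\<tau> \<in> seqs n K" "p \<noteq> 0"
  shows "p ^ card (path_edges \<sigma> \<union> path_edges \<tau>)
       = (p ^ (K - 1)) ^ 2 * (1 / p) ^ card (path_edges \<sigma> \<inter> path_edges \<tau>)"
proof -
  have "card (path_edges \<sigma>) = K - 1" "card (path_edges \<tau>) = K - 1"
    using assms(1,2) by (simp_all add: card_path_edges_seqs)
  then have "card (path_edges \<sigma> \<union> path_edges \<tau>) + card (path_edges \<sigma> \<inter> path_edges \<tau>) = 2 * (K - 1)"
    using card_Un_Int[OF finite_path_edges finite_path_edges, of \<sigma> \<tau>] by simp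
  then have "p ^ card (path_edges \<sigma> \<union> path_edges \<tau>) * p ^ card (path_edges \<sigma> \<inter> path_edges \<tau>) = (p ^ (K - 1)) ^ 2"
    by (metis power_add power_mult mult.commute)
  then show ?thesis
    using assms(3) by (simp add: power_one_over field_simps)
qed

lemma expectation_LR_sq:
  assumes "K \<le> n" "0 < lam" "lam < real n"
  shows "measure_pmf.expectation (P0 n lam) (\<lambda>G. (LR n K lam G) ^ 2)
       = measure_pmf.expectation (pmf_of_set (seqs n K))
           (\<lambda>\<pi>. (real n / lam) ^ card (path_edges [0..<K] \<inter> path_edges \<pi>))"
proof -
  let ?S = "seqs n K" and ?overlap = "\<lambda>\<sigma> \<tau>. card (path_edges \<sigma> \<inter> path_edges \<tau>)"
  define p where "p = lam / real n"
  define c where "c = real (card ?S)"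
  have p: "0 < p" "p \<le> 1" "real n / lam = 1 / p"
    using assms(2,3) by (auto simp: p_def)
  have S: "?S \<noteq> {}" "finite ?S"
    using upt_in_seqs[OF assms(1)] finite_seqs by auto
  then have "c \<noteq> 0"
    unfolding c_def by simp
  have LR_sq: "(LR n K lam G) ^ 2 = real (card (K_paths n K G)) ^ 2 / (c * p ^ (K - 1)) ^ 2"
    if "G \<in> set_pmf (random_subset (all_edges n) p)" for G
  proof -
    have "G \<subseteq> all_edges n"
      using that set_pmf_random_subset by blast
    then show ?thesis
      by (simp add: LR_eq[OF assms] p_def[symmetric] c_def power_divide)
  qed
  have "measure_pmf.expectation (P0 n lam) (\<lambda>G. (LR n K lam G) ^ 2)
      = measure_pmf.expectation (random_subset (all_edges n) p) (\<lambda>G. real (card (K_paths n K G)) ^ 2)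
        / (c * p ^ (K - 1)) ^ 2"
    unfolding P0_eq_random_subset p_def[symmetric] integral_divide_zero[symmetric]
    by (intro integral_cong_AE AE_pmfI) (simp_all add: LR_sq)
  also have "\<dots> = (\<Sum>\<sigma>\<in>?S. \<Sum>\<tau>\<in>?S. (1 / p) ^ ?overlap \<sigma> \<tau>) / c ^ 2"
    unfolding expectation_card_K_paths_sq[OF less_imp_le[OF p(1)] p(2)] sum_divide_distrib
    using p(1) \<open>c \<noteq> 0\<close>
    by (intro sum.cong refl) (simp add: power_card_Un_path_edges power_mult_distrib)
  also have "\<dots> = (\<Sum>\<sigma>\<in>?S. \<Sum>\<tau>\<in>?S. (1 / p) ^ ?overlap [0..<K] \<tau>) / c ^ 2"
    using sum_seqs_overlap_eq_upt[OF _ assms(1), where f = "\<lambda>i. (1 / p) ^ i"] by simp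
  also have "\<dots> = (\<Sum>\<tau>\<in>?S. (1 / p) ^ ?overlap [0..<K] \<tau>) / c"
    using \<open>c \<noteq> 0\<close> by (simp add: c_def power2_eq_square)
  finally show ?thesis
    by (simp add: integral_pmf_of_set[OF S] p(3) c_def)
qed

theorem lemma2:
  fixes n K :: nat and lam :: real
  assumes "1 \<le> K" and "K \<le> n" and "0 < lam" and "lam < real n"
  shows "(\<forall>G. G \<subseteq> all_edges n \<longrightarrow>
            LR n K lam G =
              1 / real (\<Prod>i<K. n - i) * real (card (K_paths n K G))
                * (lam / real n) powi (- (int K - 1)))
       \<and> measure_pmf.expectation (P0 n lam) (\<lambda>G. (LR n K lam G)^2) =
         measure_pmf.expectation (pmf_of_set (seqs n K))
           (\<lambda>\<pi>. (real n / lam) ^ card (path_edges [0..<K] \<inter> path_edges \<pi>))"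
proof -
  have "int K - 1 = int (K - 1)"
    using assms(1) by simp
  then have "(lam / real n) powi (- (int K - 1)) = inverse ((lam / real n) ^ (K - 1))"
    by (simp only: power_int_minus power_int_of_nat)
  then have "LR n K lam G =
      1 / real (\<Prod>i<K. n - i) * real (card (K_paths n K G)) * (lam / real n) powi (- (int K - 1))"
    if "G \<subseteq> all_edges n" for G
    by (simp add: LR_eq[OF assms(2-4) that] card_seqs[OF assms(2)] field_simps)
  then show ?thesis
    using expectation_LR_sq[OF assms(2-4)] by blast
qed

end
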